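(* For every $n\geq 1$, $$\sum_{T\in \mathcal P_{n,0}}x^{\mathrm{young}_T(1)}\,t^{\mathrm{eld}(T)}=\prod_{k=0}^{n-2}(x+k+kt).$$ In particular, the number of increasing (non-plane) rooted trees on $[n]$ is $(n-1)!$ and the number of increasing plane trees on $[n]$ is $(2n-3)!!$.
   Context: All trees are rooted trees whose vertices are labeled by distinct positive integers. A vertex $j$ is a descendant of $i$ if the path from the root to $j$ passes through $i$ (every vertex is a descendant of itself); $\beta_T(i)$ is the smallest descendant of $i$. If $j$ is a descendant of $i$ joined to $i$ by an edge, $j$ is a child of $i$ and the edge is written $(i,j)$; children of the same vertex are brothers. A plane tree is a rooted tree in which the children of each vertex are linearly ordered (left to right). In a plane tree $T$, a vertex $j$ is elder if it has a brother $k$ to its right with $\beta_T(k)<\beta_T(j)$. $\mathrm{eld}_T(v)$ is the number of elder children of $v$, $\mathrm{eld}(T)$ the total number of elder vertices, $\deg_T(v)$ the number of children of $v$, and $\mathrm{young}_T(v)=\deg_T(v)-\mathrm{eld}_T(v)$. An edge $(i,j)$ is proper if $j$ is an elder child of $i$ or $i<\beta_T(j)$; otherwise improper. $\mathcal P_{n,0}$ is the set of plane trees on $[n]=\{1,\dots,n\}$ (any root) with no improper edges. A (plane) tree on $[n]$ is increasing if the labels along every path from the root to another vertex form an increasing sequence. Here $(2n-3)!!=1\cdot3\cdots(2n-3)$, equal to $1$ when $n=1$. *)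

theory Defs
  imports Main
begin

text \<open>Labelled plane trees: a node carries its label and the ordered
  (left to right) list of its children subtrees.\<close>
datatype ptree = Node nat "ptree list"

fun root :: "ptree \<Rightarrow> nat" where
  "root (Node v cs) = v"

fun children :: "ptree \<Rightarrow> ptree list" where
  "children (Node v cs) = cs"

fun labels :: "ptree \<Rightarrow> nat list" where
  "labels (Node v cs) = v # concat (map labels cs)"

fun nodes :: "ptree \<Rightarrow> ptree list" where
  "nodes (Node v cs) = Node v cs # concat (map nodes cs)"

definition beta :: "ptree \<Rightarrow> nat" where
  "beta T = Min (set (labels T))"

definition elder_at :: "ptree list \<Rightarrow> nat \<Rightarrow> bool" where
  "elder_at cs a \<longleftrightarrow> (\<exists>b. a < b \<and> b < length cs \<and> beta (cs ! b) < beta (cs ! a))"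

definition eld_node :: "ptree \<Rightarrow> nat" where
  "eld_node N = card {a. a < length (children N) \<and> elder_at (children N) a}"

definition eld :: "ptree \<Rightarrow> nat" where
  "eld T = sum_list (map eld_node (nodes T))"

text \<open>young_T(v) = deg_T(v) - eld_T(v), for the (unique, labels being distinct)
  vertex with label v.\<close>
definition young :: "ptree \<Rightarrow> nat \<Rightarrow> nat" where
  "young T v = sum_list (map (\<lambda>N. if root N = v then length (children N) - eld_node N else 0) (nodes T))"

text \<open>Edge (i,j) from a vertex i to its a-th child j is proper iff j is elder or i < beta(j).\<close>
definition no_improper :: "ptree \<Rightarrow> bool" where
  "no_improper T \<longleftrightarrow> (\<forall>N\<in>set (nodes T). \<forall>a < length (children N).
      elder_at (children N) a \<or> root N < beta (children N ! a))"

definition plane_tree_on :: "nat \<Rightarrow> ptree \<Rightarrow> bool" where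
  "plane_tree_on n T \<longleftrightarrow> distinct (labels T) \<and> set (labels T) = {1..n}"

definition P_n0 :: "nat \<Rightarrow> ptree set" where
  "P_n0 n = {T. plane_tree_on n T \<and> no_improper T}"

definition increasing_ptree :: "ptree \<Rightarrow> bool" where
  "increasing_ptree T \<longleftrightarrow> (\<forall>N\<in>set (nodes T). \<forall>c\<in>set (children N). root N < root c)"

text \<open>(Non-plane) rooted trees on [n], encoded by root r and parent map p:
  p is defined (in [n]) exactly on the non-root vertices, is 0 elsewhere, and
  every vertex reaches the root by iterating p.\<close>
definition rooted_tree_on :: "nat \<Rightarrow> nat \<Rightarrow> (nat \<Rightarrow> nat) \<Rightarrow> bool" where
  "rooted_tree_on n r p \<longleftrightarrow> r \<in> {1..n} \<and>
     (\<forall>j \<in> {1..n} - {r}. p j \<in> {1..n}) \<and>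
     (\<forall>j. j \<notin> {1..n} - {r} \<longrightarrow> p j = 0) \<and>
     (\<forall>j \<in> {1..n}. \<exists>m. (p ^^ m) j = r)"

definition increasing_rooted :: "nat \<Rightarrow> nat \<Rightarrow> (nat \<Rightarrow> nat) \<Rightarrow> bool" where
  "increasing_rooted n r p \<longleftrightarrow> (\<forall>j \<in> {1..n} - {r}. p j < j)"

end

theory Submission
  imports Defs "HOL-Library.FuncSet"
begin

text \<open>
  Induction on \<open>n\<close>, removing the vertex \<open>n + 1\<close>. In a plane tree without improper edges, as in
  an increasing plane tree, the largest label is a leaf, and inserting a new largest label as a
  leaf anywhere keeps the tree in its class. So the trees on \<open>[n + 1]\<close> correspond to the trees
  \<open>T\<close> on \<open>[n]\<close> together with a slot of \<open>T\<close>: a vertex \<open>v\<close> and one of the \<open>deg v + 1\<close> gaps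
  among its children, \<open>2n - 1\<close> slots in all. The new leaf has the largest \<open>\<beta>\<close>, so it never
  makes a brother elder; put into a gap with a brother to its right it is itself elder, put into
  the last gap it raises \<open>young(v)\<close>. Hence the slots of \<open>T\<close> contribute
  \<open>x ^ young T 1 * t ^ eld T * ((n - 1) * t + (n - 1) + x)\<close>. Increasing rooted trees are the parent
  maps with \<open>p j < j\<close>, of which there are \<open>(n - 1)!\<close>.
\<close>

lemma sum_list_concat: "sum_list (concat xss) = (\<Sum>xs\<leftarrow>xss. sum_list xs)"
  by (induction xss) auto

lemma count_list_distinct: "distinct xs \<Longrightarrow> x \<in> set xs \<Longrightarrow> count_list xs x = 1"
  by (induction xs) auto

definition insert_at :: "nat \<Rightarrow> 'a \<Rightarrow> 'a list \<Rightarrow> 'a list" where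
  "insert_at i x xs = take i xs @ x # drop i xs"

lemma set_insert_at [simp]: "set (insert_at i x xs) = insert x (set xs)"
  unfolding insert_at_def by (metis append_take_drop_id set_append set_simps(2) Un_insert_right)

lemma length_insert_at [simp]: "length (insert_at i x xs) = Suc (length xs)"
  unfolding insert_at_def by simp

lemma map_insert_at: "map f (insert_at i x xs) = insert_at i (f x) (map f xs)"
  unfolding insert_at_def by (simp add: take_map drop_map)

lemma sum_list_insert_at: "sum_list (insert_at i x xs) = x + sum_list (xs :: 'a::comm_monoid_add list)"
  unfolding insert_at_def by (metis add.left_commute append_take_drop_id sum_list.Cons sum_list_append)

lemma insert_at_length_append: "insert_at (length xs) x (xs @ ys) = xs @ x # ys"
  unfolding insert_at_def by simp

lemma filter_neq_insert_at: "x \<notin> set xs \<Longrightarrow> filter (\<lambda>y. y \<noteq> x) (insert_at i x xs) = xs"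
  unfolding insert_at_def
  by (metis (mono_tags, lifting) append_take_drop_id filter.simps(2) filter_True filter_append)

lemma insert_at_inj:
  assumes "x \<notin> set xs" "i \<le> length xs" "j \<le> length xs" "insert_at i x xs = insert_at j x xs"
  shows "i = j"
proof -
  have "length (takeWhile (\<lambda>y. y \<noteq> x) (insert_at k x xs)) = k" if "k \<le> length xs" for k
  proof -
    have "\<forall>y\<in>set (take k xs). y \<noteq> x"
      using assms(1) by (auto dest: in_set_takeD)
    then show ?thesis
      using that by (simp add: insert_at_def takeWhile_tail)
  qed
  then show ?thesis
    using assms by metis
qed

lemma labels_eq_map_root_nodes: "labels T = map root (nodes T)"
  by (induction T) (simp add: map_concat o_def cong: map_cong)

lemma self_in_nodes: "T \<in> set (nodes T)"
  by (cases T) auto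

lemma in_nodes_trans: "N \<in> set (nodes T) \<Longrightarrow> M \<in> set (nodes N) \<Longrightarrow> M \<in> set (nodes T)"
  by (induction T arbitrary: N) auto

lemma labels_not_Nil: "labels T \<noteq> []"
  by (cases T) auto

lemma root_in_labels: "root T \<in> set (labels T)"
  by (cases T) auto

lemma root_in_labels_if_in_nodes: "N \<in> set (nodes T) \<Longrightarrow> root N \<in> set (labels T)"
  by (simp add: labels_eq_map_root_nodes)

lemma child_in_nodes:
  assumes "c \<in> set (children N)" "N \<in> set (nodes T)"
  shows "c \<in> set (nodes T)"
proof -
  have "c \<in> set (nodes N)"
    using assms(1) self_in_nodes[of c] by (cases N) auto
  then show ?thesis
    using assms(2) in_nodes_trans by blast
qed

lemma labels_subset_if_in_nodes: "N \<in> set (nodes T) \<Longrightarrow> set (labels N) \<subseteq> set (labels T)"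
  by (auto simp: labels_eq_map_root_nodes intro: in_nodes_trans)

lemma node_eq_if_root_eq:
  assumes "distinct (labels T)" "N \<in> set (nodes T)" "N' \<in> set (nodes T)" "root N = root N'"
  shows "N = N'"
  using assms by (auto simp: labels_eq_map_root_nodes distinct_map inj_on_def)

lemma distinct_nodes: "distinct (labels T) \<Longrightarrow> distinct (nodes T)"
  by (simp add: labels_eq_map_root_nodes distinct_map)

lemma distinct_labels_childD:
  assumes "distinct (labels (Node u cs))" "c \<in> set cs"
  shows "distinct (labels c)" "u \<notin> set (labels c)"
  using assms by (auto simp: distinct_concat_iff)

lemma distinct_labels_siblingsD:
  assumes "distinct (labels (Node u cs))" "cs = xs @ c # ys" "d \<in> set xs \<union> set ys"
  shows "set (labels c) \<inter> set (labels d) = {}"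
  using assms by (auto simp: distinct_concat_iff)

lemma length_labels_if_plane_tree_on: "plane_tree_on n T \<Longrightarrow> length (labels T) = n"
  unfolding plane_tree_on_def using distinct_card[of "labels T"] by simp

lemma length_nodes_if_plane_tree_on: "plane_tree_on n T \<Longrightarrow> length (nodes T) = n"
  using length_labels_if_plane_tree_on by (simp add: labels_eq_map_root_nodes)

lemma beta_in_labels: "beta T \<in> set (labels T)"
  unfolding beta_def using labels_not_Nil by simp

lemma beta_le_root: "beta T \<le> root T"
  unfolding beta_def using root_in_labels by simp

definition sum_nodes :: "(ptree \<Rightarrow> 'a::comm_monoid_add) \<Rightarrow> ptree \<Rightarrow> 'a" where
  "sum_nodes f T = (\<Sum>N\<leftarrow>nodes T. f N)"

lemma sum_nodes_Node: "sum_nodes f (Node u cs) = f (Node u cs) + (\<Sum>c\<leftarrow>cs. sum_nodes f c)"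
  by (simp add: sum_nodes_def map_concat sum_list_concat o_def)

lemma sum_nodes_if_root_eq:
  assumes "distinct (labels T)" "N \<in> set (nodes T)"
  shows "sum_nodes (\<lambda>N'. if root N' = root N then f N' else 0) T = f N"
proof -
  have "sum_nodes (\<lambda>N'. if root N' = root N then f N' else 0) T
      = (\<Sum>N'\<in>set (nodes T). if root N' = root N then f N' else 0)"
    by (simp add: sum_nodes_def sum_list_distinct_conv_sum_set distinct_nodes assms(1))
  also have "\<dots> = (\<Sum>N'\<in>set (nodes T). if N' = N then f N' else 0)"
    using node_eq_if_root_eq[OF assms(1) _ assms(2)] by (intro sum.cong) auto
  also have "\<dots> = f N"
    using assms(2) by simp
  finally show ?thesis .
qed

lemma length_nodes_eq_Suc_sum_degrees: "length (nodes T) = Suc (sum_nodes (\<lambda>N. length (children N)) T)"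
proof (induction T)
  case (Node u cs)
  then have "(\<Sum>c\<leftarrow>cs. length (nodes c)) = (\<Sum>c\<leftarrow>cs. Suc (sum_nodes (\<lambda>N. length (children N)) c))"
    by (intro arg_cong[where f = sum_list] map_cong) auto
  also have "\<dots> = length cs + (\<Sum>c\<leftarrow>cs. sum_nodes (\<lambda>N. length (children N)) c)"
    by (induction cs) auto
  finally show ?case
    by (simp add: sum_nodes_Node length_concat o_def)
qed

lemma sum_degrees_if_plane_tree_on:
  "plane_tree_on n T \<Longrightarrow> sum_nodes (\<lambda>N. length (children N)) T = n - 1"
  using length_nodes_eq_Suc_sum_degrees[of T] length_nodes_if_plane_tree_on by simp

section \<open>Elder children via the \<open>\<beta>\<close>-values of the children\<close>

definition has_smaller_right :: "nat list \<Rightarrow> nat \<Rightarrow> bool" where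
  "has_smaller_right bs a \<longleftrightarrow> (\<exists>b. a < b \<and> b < length bs \<and> bs ! b < bs ! a)"

lemma elder_at_iff_has_smaller_right: "elder_at cs a \<longleftrightarrow> has_smaller_right (map beta cs) a"
  unfolding elder_at_def has_smaller_right_def by auto

lemma has_smaller_right_Cons_0: "has_smaller_right (b # bs) 0 \<longleftrightarrow> (\<exists>d\<in>set bs. d < b)"
  unfolding has_smaller_right_def
  by (fastforce simp: in_set_conv_nth gr0_conv_Suc)

lemma has_smaller_right_Cons_Suc: "has_smaller_right (b # bs) (Suc a) \<longleftrightarrow> has_smaller_right bs a"
  unfolding has_smaller_right_def
  by (auto simp: Suc_less_eq2)

fun count_smaller_right :: "nat list \<Rightarrow> nat" where
  "count_smaller_right [] = 0"
| "count_smaller_right (b # bs) = (if \<exists>d\<in>set bs. d < b then 1 else 0) + count_smaller_right bs"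

text \<open>\<open>all_proper u bs\<close>: every edge from a vertex \<open>u\<close> to its children, whose \<open>\<beta>\<close>-values
  are \<open>bs\<close> from left to right, is proper.\<close>

fun all_proper :: "nat \<Rightarrow> nat list \<Rightarrow> bool" where
  "all_proper u [] \<longleftrightarrow> True"
| "all_proper u (b # bs) \<longleftrightarrow> ((\<exists>d\<in>set bs. d < b) \<or> u < b) \<and> all_proper u bs"

lemma card_has_smaller_right: "card {a. a < length bs \<and> has_smaller_right bs a} = count_smaller_right bs"
proof (induction bs)
  case (Cons b bs)
  have "{a. a < length (b # bs) \<and> has_smaller_right (b # bs) a}
      = {a. a = 0 \<and> (\<exists>d\<in>set bs. d < b)} \<union> Suc ` {a. a < length bs \<and> has_smaller_right bs a}"
    by (auto simp: has_smaller_right_Cons_Suc has_smaller_right_Cons_0 less_Suc_eq_0_disj)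
  also have "card \<dots> = (if \<exists>d\<in>set bs. d < b then 1 else 0) + count_smaller_right bs"
    by (subst card_Un_disjoint) (auto simp: card_image Cons.IH)
  finally show ?case by simp
qed simp

lemma all_proper_iff: "all_proper u bs \<longleftrightarrow> (\<forall>a<length bs. has_smaller_right bs a \<or> u < bs ! a)"
  by (induction bs) (simp_all add: All_less_Suc2 has_smaller_right_Cons_Suc has_smaller_right_Cons_0)

lemma eld_node_eq_count_smaller_right: "eld_node N = count_smaller_right (map beta (children N))"
  unfolding eld_node_def elder_at_iff_has_smaller_right card_has_smaller_right[symmetric] by simp

lemma no_improper_iff_all_proper:
  "no_improper T \<longleftrightarrow> (\<forall>N\<in>set (nodes T). all_proper (root N) (map beta (children N)))"
  unfolding no_improper_def all_proper_iff elder_at_iff_has_smaller_right by simp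

lemma eld_node_le_length_children: "eld_node N \<le> length (children N)"
proof -
  have "count_smaller_right bs \<le> length bs" for bs
    by (induction bs) auto
  then show ?thesis
    by (metis eld_node_eq_count_smaller_right length_map)
qed

lemma count_smaller_right_insert_max:
  "\<forall>d\<in>set (xs @ ys). d < m \<Longrightarrow>
     count_smaller_right (xs @ m # ys) = count_smaller_right (xs @ ys) + (if ys = [] then 0 else 1)"
  by (induction xs) (auto simp: neq_Nil_conv)

lemma all_proper_insert_max:
  "u < m \<Longrightarrow> \<forall>d\<in>set (xs @ ys). d < m \<Longrightarrow> all_proper u (xs @ m # ys) \<longleftrightarrow> all_proper u (xs @ ys)"
  by (induction xs) (auto simp: neq_Nil_conv)

section \<open>Inserting and deleting a leaf\<close>

fun insert_leaf :: "nat \<Rightarrow> nat \<Rightarrow> nat \<Rightarrow> ptree \<Rightarrow> ptree" where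
  "insert_leaf m v i (Node u cs) =
     Node u (if u = v then insert_at i (Node m []) (map (insert_leaf m v i) cs)
             else map (insert_leaf m v i) cs)"

lemma root_insert_leaf [simp]: "root (insert_leaf m v i T) = root T"
  by (cases T) auto

lemma children_insert_leaf:
  "children (insert_leaf m v i N) =
     (if root N = v then insert_at i (Node m []) (map (insert_leaf m v i) (children N))
      else map (insert_leaf m v i) (children N))"
  by (cases N) auto

lemma set_labels_insert_leaf:
  "set (labels (insert_leaf m v i T)) = set (labels T) \<union> (if v \<in> set (labels T) then {m} else {})"
  by (induction T) (auto split: if_splits)

lemma set_nodes_insert_leaf:
  "set (nodes (insert_leaf m v i T)) =
     insert_leaf m v i ` set (nodes T) \<union> (if v \<in> set (labels T) then {Node m []} else {})"
  by (induction T) (auto split: if_splits)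

lemma insert_leaf_id: "v \<notin> set (labels T) \<Longrightarrow> insert_leaf m v i T = T"
  by (induction T) (auto intro: map_idI)

lemma length_labels_insert_leaf:
  "length (labels (insert_leaf m v i T)) = length (labels T) + count_list (labels T) v"
proof (induction T)
  case (Node u cs)
  then have "(\<Sum>c\<leftarrow>cs. length (labels (insert_leaf m v i c)))
      = (\<Sum>c\<leftarrow>cs. length (labels c)) + (\<Sum>c\<leftarrow>cs. count_list (labels c) v)"
    by (induction cs) auto
  then show ?case
    by (auto simp: length_concat count_list_concat map_insert_at sum_list_insert_at o_def)
qed

lemma beta_insert_leaf:
  assumes "\<forall>l\<in>set (labels T). l < m"
  shows "beta (insert_leaf m v i T) = beta T"
proof -
  have "Min (set (labels T)) < m"
    using assms labels_not_Nil[of T] by simp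
  then have "Min (insert m (set (labels T))) = Min (set (labels T))"
    using labels_not_Nil[of T] by simp
  then show ?thesis
    unfolding beta_def by (simp add: set_labels_insert_leaf)
qed

lemma map_beta_children_insert_leaf:
  assumes "\<forall>l\<in>set (labels N). l < m"
  shows "map beta (children (insert_leaf m v i N)) =
           (if root N = v then insert_at i m (map beta (children N)) else map beta (children N))"
proof -
  have "map (beta \<circ> insert_leaf m v i) (children N) = map beta (children N)"
    using assms by (cases N) (auto intro!: beta_insert_leaf)
  moreover have "beta (Node m []) = m"
    by (simp add: beta_def)
  ultimately show ?thesis
    by (simp only: children_insert_leaf map_insert_at map_map if_distrib[of "map beta"])
qed

lemma beta_children_less:
  "\<forall>l\<in>set (labels N). l < m \<Longrightarrow> \<forall>d\<in>set (map beta (children N)). d < m"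
  using beta_in_labels by (cases N) auto

lemma eld_node_insert_leaf:
  assumes "\<forall>l\<in>set (labels N). l < m"
  shows "eld_node (insert_leaf m v i N) =
           eld_node N + (if root N = v \<and> i < length (children N) then 1 else 0)"
proof -
  let ?bs = "map beta (children N)"
  have "\<forall>d\<in>set (take i ?bs @ drop i ?bs). d < m"
    using beta_children_less[OF assms] by simp
  then have "count_smaller_right (insert_at i m ?bs) = count_smaller_right ?bs + (if i < length ?bs then 1 else 0)"
    unfolding insert_at_def by (subst count_smaller_right_insert_max) simp_all
  then show ?thesis
    by (simp add: eld_node_eq_count_smaller_right map_beta_children_insert_leaf[OF assms])
qed

lemma sum_nodes_insert_leaf:
  fixes f g :: "ptree \<Rightarrow> 'a::comm_monoid_add"
  assumes "\<And>N. N \<in> set (nodes T) \<Longrightarrow> f (insert_leaf m v i N) = f N + g N"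
    and "f (Node m []) = 0"
  shows "sum_nodes f (insert_leaf m v i T) = sum_nodes f T + sum_nodes g T"
  using assms(1)
proof (induction T)
  case (Node u cs)
  have "(\<Sum>c\<leftarrow>cs. sum_nodes f (insert_leaf m v i c)) = (\<Sum>c\<leftarrow>cs. sum_nodes f c + sum_nodes g c)"
    using Node by (intro arg_cong[where f = sum_list] map_cong) auto
  moreover have "sum_nodes f (Node m []) = 0"
    using assms(2) by (simp add: sum_nodes_Node)
  moreover have "f (insert_leaf m v i (Node u cs)) = f (Node u cs) + g (Node u cs)"
    using Node.prems self_in_nodes by blast
  moreover have "sum_nodes f (insert_leaf m v i (Node u cs))
      = f (insert_leaf m v i (Node u cs)) + (\<Sum>c\<leftarrow>cs. sum_nodes f (insert_leaf m v i c))"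
    using \<open>sum_nodes f (Node m []) = 0\<close>
    by (cases "u = v") (simp_all add: sum_nodes_Node map_insert_at sum_list_insert_at o_def)
  ultimately show ?case
    by (simp add: sum_nodes_Node sum_list_addf ac_simps del: insert_leaf.simps)
qed

fun delete_leaf :: "nat \<Rightarrow> ptree \<Rightarrow> ptree" where
  "delete_leaf m (Node u cs) = Node u (map (delete_leaf m) (filter (\<lambda>c. c \<noteq> Node m []) cs))"

lemma delete_leaf_id: "m \<notin> set (labels T) \<Longrightarrow> delete_leaf m T = T"
proof (induction T)
  case (Node u cs)
  then have "filter (\<lambda>c. c \<noteq> Node m []) cs = cs" "map (delete_leaf m) cs = cs"
    by (auto simp: filter_id_conv intro: map_idI)
  then show ?case
    by simp
qed

lemma delete_leaf_insert_leaf: "m \<notin> set (labels T) \<Longrightarrow> delete_leaf m (insert_leaf m v i T) = T"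
proof (induction T)
  case (Node u cs)
  have "Node m [] \<noteq> insert_leaf m v i c" if "c \<in> set cs" for c
  proof
    assume "Node m [] = insert_leaf m v i c"
    then have "root c = m"
      by (metis root.simps root_insert_leaf)
    then show False
      using Node.prems that root_in_labels[of c] by auto
  qed
  then have "Node m [] \<notin> set (map (insert_leaf m v i) cs)"
    unfolding set_map by blast
  moreover from this have "filter (\<lambda>c. c \<noteq> Node m []) (map (insert_leaf m v i) cs) = map (insert_leaf m v i) cs"
    by (intro filter_True) blast
  moreover have "map (delete_leaf m) (map (insert_leaf m v i) cs) = cs"
    using Node by (auto intro: map_idI)
  ultimately show ?case
    by (simp add: filter_neq_insert_at)
qed

lemma set_labels_delete_leaf_subset: "set (labels (delete_leaf m T)) \<subseteq> set (labels T)"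
  by (induction T) auto

lemma labels_delete_leaf:
  assumes "\<forall>N\<in>set (nodes T). root N = m \<longrightarrow> children N = []" "root T \<noteq> m"
  shows "labels (delete_leaf m T) = removeAll m (labels T)"
  using assms
proof (induction T)
  case (Node u cs)
  let ?L = "Node m []"
  have IH: "labels (delete_leaf m c) = removeAll m (labels c)" if "c \<in> set cs" "c \<noteq> ?L" for c
  proof (rule Node.IH[OF that(1)])
    show "\<forall>N\<in>set (nodes c). root N = m \<longrightarrow> children N = []"
      using Node.prems(1) that(1) by auto
    then show "root c \<noteq> m"
      using that(2) self_in_nodes[of c] by (cases c) auto
  qed
  have map_eq: "map (labels \<circ> delete_leaf m) (filter (\<lambda>c. c \<noteq> ?L) cs)
      = map (removeAll m \<circ> labels) (filter (\<lambda>c. c \<noteq> ?L) cs)"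
    using IH by auto
  have concat_eq: "concat (map (removeAll m \<circ> labels) (filter (\<lambda>c. c \<noteq> ?L) cs))
      = concat (map (removeAll m \<circ> labels) cs)"
    by (induction cs) auto
  have "labels (delete_leaf m (Node u cs))
      = u # concat (map (labels \<circ> delete_leaf m) (filter (\<lambda>c. c \<noteq> ?L) cs))"
    by simp
  also have "\<dots> = u # concat (map (removeAll m \<circ> labels) cs)"
    by (simp only: map_eq concat_eq)
  also have "\<dots> = removeAll m (labels (Node u cs))"
    using Node.prems(2) by (simp add: removeAll_filter_not_eq filter_concat o_def)
  finally show ?case .
qed

lemma delete_leaf_child:
  assumes "distinct (labels (Node u cs))" "cs = xs @ Node m [] # ys"
  shows "delete_leaf m (Node u cs) = Node u (xs @ ys)"
    and "insert_leaf m u (length xs) (Node u (xs @ ys)) = Node u cs"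
proof -
  have others: "m \<notin> set (labels d) \<and> u \<notin> set (labels d) \<and> d \<noteq> Node m []"
    if "d \<in> set xs \<union> set ys" for d
    using distinct_labels_siblingsD[OF assms that] distinct_labels_childD(2)[OF assms(1)] that assms(2)
    by auto
  then show "delete_leaf m (Node u cs) = Node u (xs @ ys)"
    using assms(2) by (auto simp: filter_id_conv intro!: map_idI delete_leaf_id)
  have "map (insert_leaf m u (length xs)) (xs @ ys) = xs @ ys"
    using others by (auto intro!: map_idI insert_leaf_id)
  then show "insert_leaf m u (length xs) (Node u (xs @ ys)) = Node u cs"
    using assms(2) by (simp add: insert_at_length_append)
qed

lemma delete_leaf_descendant:
  assumes "distinct (labels (Node u cs))" "cs = xs @ c # ys" "Node m [] \<notin> set cs"
    and "m \<in> set (labels c)" "v \<in> set (labels c)"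
    and "insert_leaf m v i (delete_leaf m c) = c"
  shows "delete_leaf m (Node u cs) = Node u (map (delete_leaf m) cs)"
    and "insert_leaf m v i (Node u (map (delete_leaf m) cs)) = Node u cs"
proof -
  have others: "m \<notin> set (labels d) \<and> v \<notin> set (labels d)" if "d \<in> set xs \<union> set ys" for d
    using distinct_labels_siblingsD[OF assms(1,2) that] assms(4,5) by auto
  have "filter (\<lambda>c. c \<noteq> Node m []) cs = cs"
    using assms(3) by (auto simp: filter_id_conv)
  then show "delete_leaf m (Node u cs) = Node u (map (delete_leaf m) cs)"
    by simp
  have "map (insert_leaf m v i \<circ> delete_leaf m) cs = cs"
    using others assms(2,6) by (auto intro!: map_idI simp: delete_leaf_id insert_leaf_id)
  moreover have "v \<noteq> u"
    using distinct_labels_childD(2)[OF assms(1)] assms(2,5) by auto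
  ultimately show "insert_leaf m v i (Node u (map (delete_leaf m) cs)) = Node u cs"
    by simp
qed

lemma insert_leaf_delete_leaf:
  assumes "distinct (labels T)" "Node m [] \<in> set (nodes T)" "root T \<noteq> m"
  shows "\<exists>N\<in>set (nodes (delete_leaf m T)). \<exists>i\<le>length (children N).
           insert_leaf m (root N) i (delete_leaf m T) = T"
  using assms
proof (induction T)
  case (Node u cs)
  let ?L = "Node m []"
  show ?case
  proof (cases "?L \<in> set cs")
    case True
    then obtain xs ys where cs: "cs = xs @ ?L # ys"
      by (meson split_list)
    show ?thesis
      using delete_leaf_child[OF Node.prems(1) cs]
      by (intro bexI[of _ "Node u (xs @ ys)"]) (auto intro!: exI[of _ "length xs"])
  next
    case False
    then obtain c where c: "c \<in> set cs" "?L \<in> set (nodes c)"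
      using Node.prems(2,3) by auto
    then obtain xs ys where cs: "cs = xs @ c # ys"
      by (meson split_list)
    have "distinct (labels c)"
      using distinct_labels_childD[OF Node.prems(1) c(1)] by auto
    moreover from this have "root c \<noteq> m"
      using node_eq_if_root_eq[OF _ self_in_nodes c(2)] False c(1) by auto
    ultimately obtain N i where N: "N \<in> set (nodes (delete_leaf m c))" "i \<le> length (children N)"
        "insert_leaf m (root N) i (delete_leaf m c) = c"
      using Node.IH[OF c(1) _ c(2)] by blast
    have "root N \<in> set (labels c)"
      using root_in_labels_if_in_nodes[OF N(1)] set_labels_delete_leaf_subset by blast
    moreover have "m \<in> set (labels c)"
      using root_in_labels_if_in_nodes[OF c(2)] by simp
    ultimately show ?thesis
      using delete_leaf_descendant[OF Node.prems(1) cs False _ _ N(3)] N(1,2) c(1)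
      by (intro bexI[of _ N] exI[of _ i]) auto
  qed
qed

lemma in_labels_if_insert_leaf_eq:
  assumes "m \<notin> set (labels T)" "v \<in> set (labels T)"
    and "insert_leaf m v i T = insert_leaf m v' i' T"
  shows "v' \<in> set (labels T)"
proof -
  have "m \<in> set (labels (insert_leaf m v i T))"
    using assms(2) by (simp add: set_labels_insert_leaf)
  then have "m \<in> set (labels (insert_leaf m v' i' T))"
    by (simp only: assms(3))
  then show ?thesis
    using assms(1) by (simp add: set_labels_insert_leaf split: if_splits)
qed

lemma insert_leaf_inj:
  assumes "distinct (labels T)" "m \<notin> set (labels T)"
    and "N1 \<in> set (nodes T)" "N2 \<in> set (nodes T)"
    and "i1 \<le> length (children N1)" "i2 \<le> length (children N2)"
    and "insert_leaf m (root N1) i1 T = insert_leaf m (root N2) i2 T"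
  shows "N1 = N2 \<and> i1 = i2"
  using assms
proof (induction T arbitrary: N1 N2)
  case (Node u cs)
  let ?T = "Node u cs"
  have cs_fixed: "map (insert_leaf m u j) cs = cs" for j
    using distinct_labels_childD(2)[OF Node.prems(1)] by (auto intro!: map_idI insert_leaf_id)
  have root_iff: "root N = u \<longleftrightarrow> N = ?T" if "N \<in> set (nodes ?T)" for N
    using node_eq_if_root_eq[OF Node.prems(1) that self_in_nodes] by auto
  have "length (children (insert_leaf m (root N1) i1 ?T))
      = length (children (insert_leaf m (root N2) i2 ?T))"
    using Node.prems(7) by (simp only:)
  then have "root N1 = u \<longleftrightarrow> root N2 = u"
    by (auto split: if_splits)
  then consider "root N1 = u" "root N2 = u" | "root N1 \<noteq> u" "root N2 \<noteq> u"
    by blast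
  then show ?case
  proof cases
    case 1
    then have "insert_at i1 (Node m []) cs = insert_at i2 (Node m []) cs"
      using Node.prems(7) cs_fixed by simp
    moreover have "Node m [] \<notin> set cs"
    proof
      assume "Node m [] \<in> set cs"
      then have "m \<in> set (labels ?T)"
        by force
      then show False
        using Node.prems(2) by contradiction
    qed
    ultimately show ?thesis
      using 1 root_iff Node.prems(3-6) insert_at_inj[of "Node m []" cs i1 i2] by auto
  next
    case 2
    then obtain c where c: "c \<in> set cs" "N1 \<in> set (nodes c)"
      using Node.prems(3) by auto
    have c_eq: "insert_leaf m (root N1) i1 c = insert_leaf m (root N2) i2 c"
      using Node.prems(7) 2 c(1) by simp
    have "m \<notin> set (labels c)"
      using Node.prems(2) c(1) by auto
    then have "root N2 \<in> set (labels c)"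
      using in_labels_if_insert_leaf_eq[OF _ root_in_labels_if_in_nodes[OF c(2)] c_eq] by blast
    then obtain N2' where N2': "N2' \<in> set (nodes c)" "root N2' = root N2"
      by (auto simp: labels_eq_map_root_nodes)
    then have "N2 \<in> set (nodes c)"
      using node_eq_if_root_eq[OF Node.prems(1) _ Node.prems(4)] c(1) by auto
    with \<open>m \<notin> set (labels c)\<close> show ?thesis
      using Node.IH[OF c(1) distinct_labels_childD(1)[OF Node.prems(1) c(1)] _ c(2) _ Node.prems(5,6) c_eq]
      by blast
  qed
qed

lemma delete_max_leaf:
  assumes "plane_tree_on (Suc n) T" "Node (Suc n) [] \<in> set (nodes T)" "1 \<le> n"
  shows "plane_tree_on n (delete_leaf (Suc n) T)"
    and "\<exists>N\<in>set (nodes (delete_leaf (Suc n) T)). \<exists>i\<le>length (children N).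
           insert_leaf (Suc n) (root N) i (delete_leaf (Suc n) T) = T"
proof -
  let ?L = "Node (Suc n) []"
  have T: "distinct (labels T)" "set (labels T) = {1..Suc n}"
    using assms(1) unfolding plane_tree_on_def by auto
  have "root T \<noteq> Suc n"
  proof
    assume "root T = Suc n"
    then have "T = ?L"
      using node_eq_if_root_eq[OF T(1) self_in_nodes assms(2)] by simp
    moreover have "1 \<in> set (labels T)"
      using T(2) by simp
    ultimately show False
      using assms(3) by simp
  qed
  moreover have "\<forall>N\<in>set (nodes T). root N = Suc n \<longrightarrow> children N = []"
  proof (intro ballI impI)
    fix N assume "N \<in> set (nodes T)" "root N = Suc n"
    then have "N = ?L"
      using node_eq_if_root_eq[OF T(1) _ assms(2)] by simp
    then show "children N = []"
      by simp
  qed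
  ultimately have "labels (delete_leaf (Suc n) T) = removeAll (Suc n) (labels T)"
    by (rule labels_delete_leaf[rotated])
  moreover have "{1..Suc n} - {Suc n} = {1..n}"
    by auto
  ultimately show "plane_tree_on n (delete_leaf (Suc n) T)"
    using T unfolding plane_tree_on_def by (simp add: distinct_removeAll)
  show "\<exists>N\<in>set (nodes (delete_leaf (Suc n) T)). \<exists>i\<le>length (children N).
           insert_leaf (Suc n) (root N) i (delete_leaf (Suc n) T) = T"
    using insert_leaf_delete_leaf[OF T(1) assms(2) \<open>root T \<noteq> Suc n\<close>] .
qed

section \<open>Tree classes closed under inserting a largest leaf\<close>

locale leaf_extensible =
  fixes P :: "ptree \<Rightarrow> bool"
  assumes P_insert_leaf_iff: "\<forall>l\<in>set (labels T). l < m \<Longrightarrow> P (insert_leaf m v i T) \<longleftrightarrow> P T"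
    and max_label_leaf: "P T \<Longrightarrow> N \<in> set (nodes T) \<Longrightarrow> \<forall>l\<in>set (labels T). l \<le> root N \<Longrightarrow> children N = []"
    and P_singleton: "P (Node 1 [])"
begin

definition trees_on :: "nat \<Rightarrow> ptree set" where
  "trees_on n = {T. plane_tree_on n T \<and> P T}"

definition slots :: "nat \<Rightarrow> (ptree \<times> ptree \<times> nat) set" where
  "slots n = (SIGMA T:trees_on n. SIGMA N:set (nodes T). {..length (children N)})"

lemma trees_on_1: "trees_on 1 = {Node 1 []}"
proof (intro equalityI subsetI)
  fix T assume T: "T \<in> trees_on 1"
  obtain u cs where T_eq: "T = Node u cs"
    by (cases T)
  have "length (labels T) = 1"
    using T length_labels_if_plane_tree_on unfolding trees_on_def by auto
  then have "cs = []"
    using T_eq labels_not_Nil by (cases cs) auto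
  moreover have "u = 1"
    using T T_eq unfolding trees_on_def plane_tree_on_def by auto
  ultimately show "T \<in> {Node 1 []}"
    using T_eq by simp
qed (use P_singleton in \<open>auto simp: trees_on_def plane_tree_on_def\<close>)

lemma insert_leaf_in_trees_on:
  assumes "T \<in> trees_on n" "N \<in> set (nodes T)"
  shows "insert_leaf (Suc n) (root N) i T \<in> trees_on (Suc n)"
proof -
  have T: "distinct (labels T)" "set (labels T) = {1..n}" "P T"
    using assms(1) unfolding trees_on_def plane_tree_on_def by auto
  have "root N \<in> set (labels T)"
    using root_in_labels_if_in_nodes[OF assms(2)] .
  then have "set (labels (insert_leaf (Suc n) (root N) i T)) = {1..Suc n}"
    and "length (labels (insert_leaf (Suc n) (root N) i T)) = Suc n"
    using T length_labels_if_plane_tree_on[of n T] count_list_distinct[of "labels T" "root N"]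
    by (auto simp: set_labels_insert_leaf length_labels_insert_leaf plane_tree_on_def)
  moreover have "P (insert_leaf (Suc n) (root N) i T)"
    using T P_insert_leaf_iff by simp
  ultimately show ?thesis
    unfolding trees_on_def plane_tree_on_def by (simp add: card_distinct)
qed

lemma trees_on_Suc:
  assumes "1 \<le> n"
  shows "trees_on (Suc n) = (\<lambda>(T, N, i). insert_leaf (Suc n) (root N) i T) ` slots n"
proof (intro equalityI subsetI)
  fix T assume T: "T \<in> trees_on (Suc n)"
  then have plane: "plane_tree_on (Suc n) T" and "P T"
    unfolding trees_on_def by auto
  have "Suc n \<in> set (labels T)"
    using plane unfolding plane_tree_on_def by simp
  then obtain N where N: "N \<in> set (nodes T)" "root N = Suc n"
    by (auto simp: labels_eq_map_root_nodes)
  moreover have "\<forall>l\<in>set (labels T). l \<le> root N"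
    using plane N(2) unfolding plane_tree_on_def by auto
  ultimately have "children N = []"
    using max_label_leaf \<open>P T\<close> by blast
  then have "Node (Suc n) [] \<in> set (nodes T)"
    using N by (cases N) auto
  from delete_max_leaf[OF plane this assms] obtain N' i where
    plane': "plane_tree_on n (delete_leaf (Suc n) T)" and
    N': "N' \<in> set (nodes (delete_leaf (Suc n) T))" "i \<le> length (children N')" and
    T_eq: "insert_leaf (Suc n) (root N') i (delete_leaf (Suc n) T) = T"
    by blast
  have "P (insert_leaf (Suc n) (root N') i (delete_leaf (Suc n) T)) \<longleftrightarrow> P (delete_leaf (Suc n) T)"
    using plane' by (intro P_insert_leaf_iff) (auto simp: plane_tree_on_def)
  then have "P (delete_leaf (Suc n) T)"
    using T_eq \<open>P T\<close> by simp
  then have "(delete_leaf (Suc n) T, N', i) \<in> slots n"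
    using plane' N' unfolding slots_def trees_on_def by auto
  then show "T \<in> (\<lambda>(T, N, i). insert_leaf (Suc n) (root N) i T) ` slots n"
    using T_eq by force
qed (auto simp: slots_def insert_leaf_in_trees_on)

lemma inj_on_slots: "inj_on (\<lambda>(T, N, i). insert_leaf (Suc n) (root N) i T) (slots n)"
proof (rule inj_onI, clarsimp)
  fix T1 N1 i1 T2 N2 i2
  assume "(T1, N1, i1) \<in> slots n" "(T2, N2, i2) \<in> slots n"
    and eq: "insert_leaf (Suc n) (root N1) i1 T1 = insert_leaf (Suc n) (root N2) i2 T2"
  then have T1: "distinct (labels T1)" "Suc n \<notin> set (labels T1)" "N1 \<in> set (nodes T1)" "i1 \<le> length (children N1)"
    and T2: "Suc n \<notin> set (labels T2)" "N2 \<in> set (nodes T2)" "i2 \<le> length (children N2)"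
    unfolding slots_def trees_on_def plane_tree_on_def by auto
  have "T1 = delete_leaf (Suc n) (insert_leaf (Suc n) (root N1) i1 T1)"
    using delete_leaf_insert_leaf[OF T1(2)] by simp
  also have "\<dots> = T2"
    using delete_leaf_insert_leaf[OF T2(1)] eq by simp
  finally have "T1 = T2" .
  moreover from this have "N1 = N2 \<and> i1 = i2"
    using insert_leaf_inj[OF T1(1-3) _ T1(4)] T2(2,3) eq by simp
  ultimately show "T1 = T2 \<and> N1 = N2 \<and> i1 = i2"
    by simp
qed

lemma finite_trees_on: "1 \<le> n \<Longrightarrow> finite (trees_on n)"
proof (induction n rule: dec_induct)
  case base
  then show ?case
    using trees_on_1 by simp
next
  case (step n)
  then have "finite (slots n)"
    unfolding slots_def by (intro finite_SigmaI) auto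
  then show ?case
    using trees_on_Suc[OF step(1)] by simp
qed

lemma sum_trees_on_Suc:
  assumes "1 \<le> n"
  shows "sum w (trees_on (Suc n))
           = (\<Sum>T\<in>trees_on n. \<Sum>N\<leftarrow>nodes T. \<Sum>i\<le>length (children N). w (insert_leaf (Suc n) (root N) i T))"
proof -
  have "sum w (trees_on (Suc n)) = (\<Sum>(T, N, i)\<in>slots n. w (insert_leaf (Suc n) (root N) i T))"
    unfolding trees_on_Suc[OF assms] by (subst sum.reindex[OF inj_on_slots]) (simp add: case_prod_unfold)
  also have "\<dots> = (\<Sum>T\<in>trees_on n. \<Sum>N\<in>set (nodes T). \<Sum>i\<le>length (children N). w (insert_leaf (Suc n) (root N) i T))"
    unfolding slots_def using finite_trees_on[OF assms] by (simp add: sum.Sigma)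
  also have "\<dots> = (\<Sum>T\<in>trees_on n. \<Sum>N\<leftarrow>nodes T. \<Sum>i\<le>length (children N). w (insert_leaf (Suc n) (root N) i T))"
    by (intro sum.cong refl sum.distinct_set_conv_list distinct_nodes) (simp add: trees_on_def plane_tree_on_def)
  finally show ?thesis .
qed

end

lemma no_improper_insert_leaf:
  assumes "\<forall>l\<in>set (labels T). l < m"
  shows "no_improper (insert_leaf m v i T) \<longleftrightarrow> no_improper T"
proof -
  have "all_proper (root N) (map beta (children (insert_leaf m v i N)))
      \<longleftrightarrow> all_proper (root N) (map beta (children N))" if "N \<in> set (nodes T)" for N
  proof -
    have below: "\<forall>l\<in>set (labels N). l < m"
      using assms labels_subset_if_in_nodes[OF that] by auto
    then have "\<forall>d\<in>set (take i (map beta (children N)) @ drop i (map beta (children N))). d < m"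
      using beta_children_less by simp
    moreover have "root N < m"
      using below root_in_labels by blast
    ultimately show ?thesis
      by (simp add: map_beta_children_insert_leaf[OF below] insert_at_def all_proper_insert_max)
  qed
  then show ?thesis
    unfolding no_improper_iff_all_proper set_nodes_insert_leaf by auto
qed

lemma no_improper_max_label_leaf:
  assumes "no_improper T" "N \<in> set (nodes T)" "\<forall>l\<in>set (labels T). l \<le> root N"
  shows "children N = []"
proof (rule ccontr)
  let ?cs = "children N"
  let ?a = "length ?cs - 1"
  assume "?cs \<noteq> []"
  then have "?a < length ?cs"
    by simp
  moreover have "\<not> elder_at ?cs ?a"
    by (auto simp: elder_at_def)
  ultimately have "root N < beta (?cs ! ?a)"
    using assms(1,2) unfolding no_improper_def by blast
  moreover have "root (?cs ! ?a) \<in> set (labels T)"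
    using \<open>?a < length ?cs\<close> assms(2) child_in_nodes root_in_labels_if_in_nodes nth_mem by blast
  ultimately show False
    using assms(3) beta_le_root[of "?cs ! ?a"] by fastforce
qed

interpretation no_improper: leaf_extensible no_improper
proof
  show "no_improper (insert_leaf m v i T) \<longleftrightarrow> no_improper T" if "\<forall>l\<in>set (labels T). l < m" for T m v i
    using that by (rule no_improper_insert_leaf)
  show "children N = []" if "no_improper T" "N \<in> set (nodes T)" "\<forall>l\<in>set (labels T). l \<le> root N" for T N
    using that by (rule no_improper_max_label_leaf)
qed (simp add: no_improper_def)

lemma increasing_ptree_insert_leaf:
  assumes "\<forall>l\<in>set (labels T). l < m"
  shows "increasing_ptree (insert_leaf m v i T) \<longleftrightarrow> increasing_ptree T"
proof -
  have "(\<forall>c\<in>set (children (insert_leaf m v i N)). root N < root c) \<longleftrightarrow> (\<forall>c\<in>set (children N). root N < root c)"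
    if "N \<in> set (nodes T)" for N
  proof -
    have "root N < m"
      using assms root_in_labels_if_in_nodes[OF that] by blast
    then show ?thesis
      by (auto simp: children_insert_leaf)
  qed
  then show ?thesis
    unfolding increasing_ptree_def set_nodes_insert_leaf by auto
qed

lemma increasing_ptree_max_label_leaf:
  assumes "increasing_ptree T" "N \<in> set (nodes T)" "\<forall>l\<in>set (labels T). l \<le> root N"
  shows "children N = []"
proof (rule ccontr)
  assume "children N \<noteq> []"
  then obtain c where c: "c \<in> set (children N)"
    by (cases "children N") auto
  then have "root N < root c"
    using assms(1,2) unfolding increasing_ptree_def by auto
  moreover have "root c \<in> set (labels T)"
    using c assms(2) child_in_nodes root_in_labels_if_in_nodes by blast
  ultimately show False
    using assms(3) by fastforce
qed

interpretation increasing: leaf_extensible increasing_ptree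
proof
  show "increasing_ptree (insert_leaf m v i T) \<longleftrightarrow> increasing_ptree T" if "\<forall>l\<in>set (labels T). l < m" for T m v i
    using that by (rule increasing_ptree_insert_leaf)
  show "children N = []" if "increasing_ptree T" "N \<in> set (nodes T)" "\<forall>l\<in>set (labels T). l \<le> root N" for T N
    using that by (rule increasing_ptree_max_label_leaf)
qed (simp add: increasing_ptree_def)

lemma P_n0_eq_trees_on: "P_n0 n = no_improper.trees_on n"
  by (simp add: P_n0_def no_improper.trees_on_def)

section \<open>Counting \<open>P_n0\<close> with weights and increasing plane trees\<close>

lemma eld_insert_leaf:
  assumes "distinct (labels T)" "\<forall>l\<in>set (labels T). l < m" "N \<in> set (nodes T)"
  shows "eld (insert_leaf m (root N) i T) = eld T + (if i < length (children N) then 1 else 0)"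
proof -
  have "eld (insert_leaf m (root N) i T)
      = eld T + sum_nodes (\<lambda>N'. if root N' = root N then if i < length (children N') then 1 else 0 else 0) T"
    unfolding eld_def sum_nodes_def[symmetric]
  proof (rule sum_nodes_insert_leaf)
    fix N' assume "N' \<in> set (nodes T)"
    then have "\<forall>l\<in>set (labels N'). l < m"
      using assms(2) labels_subset_if_in_nodes by blast
    then show "eld_node (insert_leaf m (root N) i N')
        = eld_node N' + (if root N' = root N then if i < length (children N') then 1 else 0 else 0)"
      by (simp add: eld_node_insert_leaf)
  qed (simp add: eld_node_def)
  then show ?thesis
    by (simp add: sum_nodes_if_root_eq[OF assms(1,3)])
qed

lemma young_insert_leaf:
  assumes "distinct (labels T)" "\<forall>l\<in>set (labels T). l < m" "N \<in> set (nodes T)"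
  shows "young (insert_leaf m (root N) i T) w
           = young T w + (if root N = w \<and> length (children N) \<le> i then 1 else 0)"
proof -
  let ?young_at = "\<lambda>N'. if root N' = w then length (children N') - eld_node N' else 0"
  have "young (insert_leaf m (root N) i T) w
      = young T w + sum_nodes (\<lambda>N'. if root N' = root N then if root N = w \<and> length (children N') \<le> i then 1 else 0 else 0) T"
    unfolding young_def sum_nodes_def[symmetric]
  proof (rule sum_nodes_insert_leaf)
    fix N' assume "N' \<in> set (nodes T)"
    then have "\<forall>l\<in>set (labels N'). l < m"
      using assms(2) labels_subset_if_in_nodes by blast
    then show "?young_at (insert_leaf m (root N) i N')
        = ?young_at N' + (if root N' = root N then if root N = w \<and> length (children N') \<le> i then 1 else 0 else 0)"
      using eld_node_le_length_children[of N'] by (auto simp: eld_node_insert_leaf children_insert_leaf)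
  qed (simp add: eld_node_def)
  then show ?thesis
    by (simp add: sum_nodes_if_root_eq[OF assms(1,3)])
qed

lemma sum_weight_insert_leaf_at_node:
  fixes x t :: "'a::comm_ring_1"
  assumes "distinct (labels T)" "\<forall>l\<in>set (labels T). l < m" "N \<in> set (nodes T)"
  shows "(\<Sum>i\<le>length (children N).
            x ^ young (insert_leaf m (root N) i T) 1 * t ^ eld (insert_leaf m (root N) i T))
         = x ^ young T 1 * t ^ eld T * (of_nat (length (children N)) * t + (if root N = 1 then x else 1))"
proof -
  let ?k = "length (children N)"
  let ?C = "x ^ young T 1 * t ^ eld T"
  let ?w = "\<lambda>i. x ^ young (insert_leaf m (root N) i T) 1 * t ^ eld (insert_leaf m (root N) i T)"
  have "(\<Sum>i\<le>?k. ?w i) = (\<Sum>i<?k. ?w i) + ?w ?k"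
    by (simp add: lessThan_Suc_atMost[symmetric])
  also have "(\<Sum>i<?k. ?w i) = (\<Sum>i<?k. ?C * t)"
    by (rule sum.cong) (simp_all add: eld_insert_leaf[OF assms] young_insert_leaf[OF assms])
  also have "?w ?k = ?C * (if root N = 1 then x else 1)"
    by (simp add: eld_insert_leaf[OF assms] young_insert_leaf[OF assms])
  finally show ?thesis
    by (simp add: algebra_simps)
qed

lemma sum_if_root_eq_1:
  fixes x :: "'a::comm_ring_1"
  assumes "plane_tree_on n T" "1 \<le> n"
  shows "(\<Sum>N\<leftarrow>nodes T. if root N = 1 then x else 1) = x + of_nat (n - 1)"
proof -
  have "1 \<in> set (labels T)"
    using assms unfolding plane_tree_on_def by simp
  then obtain N1 where N1: "N1 \<in> set (nodes T)" "root N1 = 1"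
    by (auto simp: labels_eq_map_root_nodes)
  have "(\<Sum>N\<leftarrow>nodes T. if root N = 1 then x else 1)
      = (\<Sum>N\<leftarrow>nodes T. 1 + (if root N = root N1 then x - 1 else 0))"
    using N1(2) by (intro arg_cong[where f = sum_list] map_cong) auto
  also have "\<dots> = of_nat n + (x - 1)"
    using sum_nodes_if_root_eq[OF _ N1(1), of "\<lambda>_. x - 1"] length_nodes_if_plane_tree_on[OF assms(1)] assms(1)
    by (simp add: sum_list_addf sum_list_triv sum_nodes_def plane_tree_on_def)
  also have "\<dots> = x + of_nat (n - 1)"
    using assms(2) by simp
  finally show ?thesis .
qed

lemma sum_weight_insert_leaf:
  fixes x t :: "'a::comm_ring_1"
  assumes "plane_tree_on n T" "1 \<le> n"
  shows "(\<Sum>N\<leftarrow>nodes T. \<Sum>i\<le>length (children N).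
            x ^ young (insert_leaf (Suc n) (root N) i T) 1 * t ^ eld (insert_leaf (Suc n) (root N) i T))
         = x ^ young T 1 * t ^ eld T * (x + of_nat (n - 1) + of_nat (n - 1) * t)"
proof -
  let ?C = "x ^ young T 1 * t ^ eld T"
  have T: "distinct (labels T)" "\<forall>l\<in>set (labels T). l < Suc n"
    using assms(1) unfolding plane_tree_on_def by auto
  have "(\<Sum>N\<leftarrow>nodes T. \<Sum>i\<le>length (children N).
            x ^ young (insert_leaf (Suc n) (root N) i T) 1 * t ^ eld (insert_leaf (Suc n) (root N) i T))
      = (\<Sum>N\<leftarrow>nodes T. ?C * (of_nat (length (children N)) * t + (if root N = 1 then x else 1)))"
    by (rule arg_cong[where f = sum_list], rule map_cong[OF refl], rule sum_weight_insert_leaf_at_node[OF T])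
  also have "\<dots> = ?C * (of_nat (sum_nodes (\<lambda>N. length (children N)) T) * t
                        + (\<Sum>N\<leftarrow>nodes T. if root N = 1 then x else 1))"
    by (simp add: sum_list_const_mult sum_list_addf sum_list_mult_const sum_nodes_def
        flip: sum_list_of_nat) (simp add: o_def)
  also have "\<dots> = ?C * (x + of_nat (n - 1) + of_nat (n - 1) * t)"
    by (simp only: sum_degrees_if_plane_tree_on[OF assms(1)] sum_if_root_eq_1[OF assms]) (simp add: algebra_simps)
  finally show ?thesis .
qed

lemma sum_P_n0_weights:
  fixes x t :: "'a::comm_ring_1"
  assumes "1 \<le> n"
  shows "(\<Sum>T\<in>P_n0 n. x ^ young T 1 * t ^ eld T) = (\<Prod>k<n - 1. x + of_nat k + of_nat k * t)"
  using assms
proof (induction n rule: dec_induct)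
  case base
  have "young (Node 1 []) 1 = 0" "eld (Node 1 []) = 0"
    by (simp_all add: young_def eld_def eld_node_def)
  then show ?case
    using no_improper.trees_on_1 by (simp add: P_n0_eq_trees_on)
next
  case (step n)
  let ?w = "\<lambda>T. x ^ young T 1 * t ^ eld T"
  have "(\<Sum>T\<in>P_n0 (Suc n). ?w T) = (\<Sum>T\<in>P_n0 n. ?w T * (x + of_nat (n - 1) + of_nat (n - 1) * t))"
    unfolding P_n0_eq_trees_on no_improper.sum_trees_on_Suc[OF step(1)]
    by (intro sum.cong refl sum_weight_insert_leaf step(1)) (simp add: no_improper.trees_on_def)
  also have "\<dots> = (\<Prod>k<n - 1. x + of_nat k + of_nat k * t) * (x + of_nat (n - 1) + of_nat (n - 1) * t)"
    by (simp only: sum_distrib_right[symmetric] step.IH)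
  also have "\<dots> = (\<Prod>k<Suc n - 1. x + of_nat k + of_nat k * t)"
    using step(1) by (cases n) (simp_all add: mult.commute)
  finally show ?case .
qed

lemma card_increasing_plane_trees:
  assumes "1 \<le> n"
  shows "card {T. plane_tree_on n T \<and> increasing_ptree T} = (\<Prod>i<n - 1. 2 * i + 1)"
  unfolding increasing.trees_on_def[symmetric]
  using assms
proof (induction n rule: dec_induct)
  case base
  then show ?case
    using increasing.trees_on_1 by simp
next
  case (step n)
  have "card (increasing.trees_on (Suc n)) = (\<Sum>T\<in>increasing.trees_on (Suc n). 1)"
    by simp
  also have "\<dots> = (\<Sum>T\<in>increasing.trees_on n. \<Sum>N\<leftarrow>nodes T. Suc (length (children N)))"
    unfolding increasing.sum_trees_on_Suc[OF step(1)] by simp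
  also have "\<dots> = (\<Sum>T\<in>increasing.trees_on n. 2 * (n - 1) + 1)"
  proof (rule sum.cong)
    fix T assume "T \<in> increasing.trees_on n"
    then have "plane_tree_on n T"
      by (simp add: increasing.trees_on_def)
    moreover have "(\<Sum>N\<leftarrow>Ns. Suc (length (children N))) = length Ns + (\<Sum>N\<leftarrow>Ns. length (children N))" for Ns
      by (induction Ns) auto
    ultimately show "(\<Sum>N\<leftarrow>nodes T. Suc (length (children N))) = 2 * (n - 1) + 1"
      using step(1) by (simp add: length_nodes_if_plane_tree_on sum_degrees_if_plane_tree_on[unfolded sum_nodes_def])
  qed simp
  also have "\<dots> = (\<Prod>i<Suc n - 1. 2 * i + 1)"
    using step by (cases n) simp_all
  finally show ?case .
qed

section \<open>Increasing rooted trees\<close>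

definition increasing_parent_maps :: "nat \<Rightarrow> (nat \<Rightarrow> nat) set" where
  "increasing_parent_maps n = {p. (\<forall>j\<in>{2..n}. p j \<in> {1..j - 1}) \<and> (\<forall>j. j \<notin> {2..n} \<longrightarrow> p j = 0)}"

lemma funpow_increasing_parent_map_reaches_1:
  assumes "p \<in> increasing_parent_maps n" "j \<in> {1..n}"
  shows "\<exists>k. (p ^^ k) j = 1"
  using assms(2)
proof (induction j rule: less_induct)
  case (less j)
  show ?case
  proof (cases "j = 1")
    case True
    then show ?thesis
      by (intro exI[of _ 0]) simp
  next
    case False
    then have "p j \<in> {1..j - 1}"
      using assms(1) less.prems unfolding increasing_parent_maps_def by auto
    then obtain k where "(p ^^ k) (p j) = 1"
      using less.IH less.prems by fastforce
    then have "(p ^^ Suc k) j = 1"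
      by (simp add: funpow_Suc_right del: funpow.simps)
    then show ?thesis ..
  qed
qed

lemma increasing_rooted_tree_iff:
  assumes "1 \<le> n"
  shows "rooted_tree_on n r p \<and> increasing_rooted n r p \<longleftrightarrow> r = 1 \<and> p \<in> increasing_parent_maps n"
proof
  assume tree: "rooted_tree_on n r p \<and> increasing_rooted n r p"
  have "r = 1"
  proof (rule ccontr)
    assume "r \<noteq> 1"
    then have "1 \<in> {1..n} - {r}"
      using assms by simp
    then have "p 1 \<in> {1..n}" "p 1 < 1"
      using tree unfolding rooted_tree_on_def increasing_rooted_def by blast+
    then show False
      by simp
  qed
  have "p j \<in> {1..j - 1}" if "j \<in> {2..n}" for j
  proof -
    have "j \<in> {1..n} - {r}"
      using that \<open>r = 1\<close> by auto
    then have "p j \<in> {1..n}" "p j < j"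
      using tree unfolding rooted_tree_on_def increasing_rooted_def by auto
    then show ?thesis
      by auto
  qed
  moreover have "p j = 0" if "j \<notin> {2..n}" for j
    using that tree \<open>r = 1\<close> unfolding rooted_tree_on_def by auto
  ultimately show "r = 1 \<and> p \<in> increasing_parent_maps n"
    unfolding increasing_parent_maps_def using \<open>r = 1\<close> by blast
next
  assume "r = 1 \<and> p \<in> increasing_parent_maps n"
  then have r: "r = 1" and p: "p \<in> increasing_parent_maps n"
    by auto
  have "p j \<in> {1..j - 1}" if "j \<in> {1..n} - {r}" for j
    using that p r unfolding increasing_parent_maps_def by auto
  moreover have "p j = 0" if "j \<notin> {1..n} - {r}" for j
    using that p r unfolding increasing_parent_maps_def by auto
  ultimately show "rooted_tree_on n r p \<and> increasing_rooted n r p"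
    using assms r funpow_increasing_parent_map_reaches_1[OF p]
    unfolding rooted_tree_on_def increasing_rooted_def by fastforce
qed

lemma bij_betw_restrict_increasing_parent_maps:
  "bij_betw (\<lambda>p. restrict p {2..n}) (increasing_parent_maps n) (PiE {2..n} (\<lambda>j. {1..j - 1}))"
proof (rule bij_betw_imageI)
  show "inj_on (\<lambda>p. restrict p {2..n}) (increasing_parent_maps n)"
  proof (rule inj_onI, rule ext)
    fix p q j
    assume "p \<in> increasing_parent_maps n" "q \<in> increasing_parent_maps n"
      and eq: "restrict p {2..n} = restrict q {2..n}"
    show "p j = q j"
    proof (cases "j \<in> {2..n}")
      case True
      then show ?thesis
        using fun_cong[OF eq, of j] by simp
    next
      case False
      then show ?thesis
        using \<open>p \<in> increasing_parent_maps n\<close> \<open>q \<in> increasing_parent_maps n\<close>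
        by (simp add: increasing_parent_maps_def)
    qed
  qed
  show "(\<lambda>p. restrict p {2..n}) ` increasing_parent_maps n = PiE {2..n} (\<lambda>j. {1..j - 1})"
  proof (intro equalityI subsetI)
    fix f assume f: "f \<in> PiE {2..n} (\<lambda>j. {1..j - 1})"
    then have "(\<lambda>j. if j \<in> {2..n} then f j else 0) \<in> increasing_parent_maps n"
      unfolding increasing_parent_maps_def by auto
    moreover have "f = restrict (\<lambda>j. if j \<in> {2..n} then f j else 0) {2..n}"
      using f by (auto simp: PiE_iff extensional_def fun_eq_iff)
    ultimately show "f \<in> (\<lambda>p. restrict p {2..n}) ` increasing_parent_maps n"
      by blast
  qed (auto simp: increasing_parent_maps_def)
qed

lemma card_increasing_parent_maps: "card (increasing_parent_maps n) = fact (n - 1)"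
proof -
  have "card (increasing_parent_maps n) = (\<Prod>j\<in>{2..n}. card {1..j - 1})"
    using bij_betw_same_card[OF bij_betw_restrict_increasing_parent_maps] by (simp add: card_PiE)
  also have "\<dots> = fact (n - 1)"
  proof (induction n)
    case (Suc n)
    then show ?case
      by (cases n) (auto simp: atLeastAtMostSuc_conv)
  qed simp
  finally show ?thesis .
qed

lemma card_increasing_rooted_trees:
  assumes "1 \<le> n"
  shows "card {(r, p). rooted_tree_on n r p \<and> increasing_rooted n r p} = fact (n - 1)"
proof -
  have "{(r, p). rooted_tree_on n r p \<and> increasing_rooted n r p} = Pair 1 ` increasing_parent_maps n"
    using increasing_rooted_tree_iff[OF assms] by auto
  moreover have "inj_on (Pair (1::nat)) (increasing_parent_maps n)"
    by (simp add: inj_on_def)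
  ultimately show ?thesis
    by (simp only: card_image card_increasing_parent_maps)
qed

theorem proposition2p4:
  fixes n :: nat and x t :: "'a :: comm_ring_1"
  assumes "n \<ge> 1"
  shows "((\<Sum>T\<in>P_n0 n. x ^ young T 1 * t ^ eld T)
           = (\<Prod>k<n - 1. x + of_nat k + of_nat k * t))
         \<and> card {(r, p). rooted_tree_on n r p \<and> increasing_rooted n r p} = fact (n - 1)
         \<and> card {T. plane_tree_on n T \<and> increasing_ptree T} = (\<Prod>i<n - 1. 2 * i + 1)"
  using sum_P_n0_weights[OF assms] card_increasing_rooted_trees[OF assms]
    card_increasing_plane_trees[OF assms]
  by blast

end
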